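(* Let $\kappa,\beta$ be real numbers with $\kappa\beta<0$ (in particular $\kappa\neq0$). Let $\mathcal{H}(\kappa,\beta)$ be the operator $\mathcal{H}(\kappa,\beta)\phi=-\phi''$ in $L_2(\mathbb{R})$ with domain consisting of the functions $\phi\in W_2^2(\mathbb{R}\setminus\{0\})$ satisfying $$\phi(+0)=\kappa\,\phi(-0),\qquad \phi'(+0)=\beta\,\phi(-0)+\kappa^{-1}\phi'(-0).$$ Then $\mathcal{H}(\kappa,\beta)$ possesses a unique eigenvalue $$E=-\Big(\frac{\kappa\beta}{\kappa^2+1}\Big)^2.$$ *)

theory Defs
  imports "HOL-Analysis.Analysis"
begin

definition L2_on :: "real set \<Rightarrow> (real \<Rightarrow> complex) \<Rightarrow> bool" where
  "L2_on S f \<longleftrightarrow> f measurable_on S \<and> (\<lambda>x. (norm (f x))^2) integrable_on S"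

text \<open>Sobolev space W_2^2 on an open interval S: phi is differentiable with derivative
  phi', phi' is absolutely continuous with (weak) derivative phi'', and phi, phi', phi''
  are all square integrable on S.\<close>
definition W22_on :: "real set \<Rightarrow> (real \<Rightarrow> complex) \<Rightarrow> (real \<Rightarrow> complex) \<Rightarrow> (real \<Rightarrow> complex) \<Rightarrow> bool" where
  "W22_on S \<phi> \<phi>' \<phi>'' \<longleftrightarrow>
     (\<forall>x\<in>S. (\<phi> has_vector_derivative \<phi>' x) (at x)) \<and>
     (\<forall>x\<in>S. \<forall>y\<in>S. x \<le> y \<longrightarrow> (\<phi>'' has_integral (\<phi>' y - \<phi>' x)) {x..y}) \<and>
     L2_on S \<phi> \<and> L2_on S \<phi>' \<and> L2_on S \<phi>''"

definition in_dom_H :: "real \<Rightarrow> real \<Rightarrow> (real \<Rightarrow> complex) \<Rightarrow> (real \<Rightarrow> complex) \<Rightarrow> (real \<Rightarrow> complex) \<Rightarrow> bool" where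
  "in_dom_H \<kappa> \<beta> \<phi> \<phi>' \<phi>'' \<longleftrightarrow>
     W22_on {..<0} \<phi> \<phi>' \<phi>'' \<and> W22_on {0<..} \<phi> \<phi>' \<phi>'' \<and>
     (\<exists>pm pp dm dp.
        (\<phi> \<longlongrightarrow> pm) (at_left 0) \<and> (\<phi> \<longlongrightarrow> pp) (at_right 0) \<and>
        (\<phi>' \<longlongrightarrow> dm) (at_left 0) \<and> (\<phi>' \<longlongrightarrow> dp) (at_right 0) \<and>
        pp = complex_of_real \<kappa> * pm \<and>
        dp = complex_of_real \<beta> * pm + complex_of_real (inverse \<kappa>) * dm)"

definition is_eigenvalue_H :: "real \<Rightarrow> real \<Rightarrow> complex \<Rightarrow> bool" where
  "is_eigenvalue_H \<kappa> \<beta> lam \<longleftrightarrow>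
     (\<exists>\<phi> \<phi>' \<phi>''. in_dom_H \<kappa> \<beta> \<phi> \<phi>' \<phi>'' \<and>
        \<not> (AE x in lebesgue. \<phi> x = 0) \<and>
        (AE x in lebesgue. x \<noteq> 0 \<longrightarrow> - \<phi>'' x = lam * \<phi> x))"

end

theory Submission
  imports Defs
begin

(*
  On each half-line an eigenfunction solves phi'' = k^2 phi with k = sqrt(-lambda), Re k >= 0.
  Since phi' + k phi (resp. phi' - k phi on the left) is a multiple of exp(k x) (resp. exp(-k x)),
  whose modulus is bounded below, square integrability forces it to vanish: phi is A exp(k x)
  on the left and B exp(-k x) on the right. The coupling conditions at 0 then read B = kappa A
  and -k B = beta A + k A / kappa, and A <> 0 gives k (kappa^2 + 1) = -kappa beta. Conversely,
  for kappa beta < 0 this k is positive and the two-sided exponential is an eigenfunction.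
*)

lemma has_vector_derivative_from_integral_ae:
  fixes F f g :: "real \<Rightarrow> 'a::banach"
  assumes S: "open S"
    and F: "\<And>x y. x \<in> S \<Longrightarrow> y \<in> S \<Longrightarrow> x \<le> y \<Longrightarrow> (f has_integral (F y - F x)) {x..y}"
    and g: "continuous_on S g"
    and ae: "AE x in lebesgue. x \<in> S \<longrightarrow> f x = g x"
    and x: "x \<in> S"
  shows "(F has_vector_derivative g x) (at x)"
proof -
  obtain e where "e > 0" and e: "cball x e \<subseteq> S"
    using S x open_contains_cball by blast
  define a where "a = x - e"
  define b where "b = x + e"
  have ab: "{a..b} \<subseteq> S" and x_ab: "x \<in> {a<..<b}"
    using e \<open>e > 0\<close> by (auto simp: a_def b_def cball_eq_atLeastAtMost)
  obtain N where N: "negligible N" and fg: "\<And>y. y \<in> S - N \<Longrightarrow> f y = g y"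
  proof -
    obtain N where "N \<in> null_sets lebesgue" "\<And>y. y \<in> space lebesgue - N \<Longrightarrow> y \<in> S \<longrightarrow> f y = g y"
      using ae by (auto elim: AE_E3)
    then show thesis
      using that by (auto simp: negligible_iff_null_sets)
  qed
  have F_eq: "F u = F a + integral {a..u} g" if "u \<in> {a<..<b}" for u
  proof -
    have "(f has_integral (F u - F a)) {a..u}"
      using that ab by (intro F) auto
    moreover have "\<And>y. y \<in> {a..u} - N \<Longrightarrow> f y = g y"
      using ab that by (intro fg) auto
    ultimately have "(g has_integral (F u - F a)) {a..u}"
      using has_integral_spike_eq[OF N] by blast
    then show ?thesis
      by (simp add: integral_unique)
  qed
  have "((\<lambda>u. F a + integral {a..u} g) has_vector_derivative g x) (at x within {a..b})"
    using x_ab continuous_on_subset[OF g ab]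
    by (auto intro!: derivative_eq_intros integral_has_vector_derivative)
  then have "((\<lambda>u. F a + integral {a..u} g) has_vector_derivative g x) (at x)"
    using x_ab at_within_open[OF x_ab open_greaterThanLessThan]
    by (metis has_vector_derivative_within_subset greaterThanLessThan_subseteq_atLeastAtMost_iff order_refl)
  then show ?thesis
    using has_vector_derivative_transform_within_open[OF _ open_greaterThanLessThan x_ab] F_eq
    by (metis (no_types, lifting))
qed

lemma W22_on_second_derivative:
  assumes W: "W22_on S \<phi> \<phi>' \<phi>''" and S: "open S"
    and ae: "AE x in lebesgue. x \<in> S \<longrightarrow> \<phi>'' x = c * \<phi> x"
    and x: "x \<in> S"
  shows "(\<phi>' has_vector_derivative c * \<phi> x) (at x)"
proof -
  have "continuous_on S \<phi>"
    using W unfolding W22_on_def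
    by (meson continuous_at_imp_continuous_on has_vector_derivative_continuous)
  then show ?thesis
    using W unfolding W22_on_def
    by (intro has_vector_derivative_from_integral_ae[OF S _ _ ae x] continuous_intros) auto
qed

lemma has_vector_derivative_exp_scaled:
  fixes c :: complex
  shows "((\<lambda>x. exp (c * of_real x)) has_vector_derivative c * exp (c * of_real x)) (at x within S)"
  by (auto intro!: derivative_eq_intros has_vector_derivative_real_field)

lemma linear_ode_solution_exp:
  fixes u :: "real \<Rightarrow> complex"
  assumes S: "convex S" and u: "\<And>x. x \<in> S \<Longrightarrow> (u has_vector_derivative c * u x) (at x)"
  obtains D where "\<And>x. x \<in> S \<Longrightarrow> u x = D * exp (c * of_real x)"
proof -
  have deriv: "((\<lambda>x. u x * exp (- c * of_real x)) has_vector_derivative 0) (at x within S)"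
    if "x \<in> S" for x
  proof -
    have "((\<lambda>x. u x * exp (- c * of_real x)) has_vector_derivative
          u x * (- c * exp (- c * of_real x)) + c * u x * exp (- c * of_real x)) (at x within S)"
      using has_vector_derivative_at_within[OF u[OF that]]
      by (intro has_vector_derivative_mult has_vector_derivative_exp_scaled)
    then show ?thesis
      by (simp add: mult_ac)
  qed
  obtain D where D: "\<And>x. x \<in> S \<Longrightarrow> u x * exp (- c * of_real x) = D"
    using has_vector_derivative_zero_constant[OF S deriv] by blast
  show ?thesis
  proof
    fix x assume "x \<in> S"
    have inv: "exp (- c * of_real x) * exp (c * of_real x) = 1"
      by (simp flip: exp_add)
    have "u x = (u x * exp (- c * of_real x)) * exp (c * of_real x)"
      unfolding mult.assoc inv by simp
    then show "u x = D * exp (c * of_real x)"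
      unfolding D[OF \<open>x \<in> S\<close>] .
  qed
qed

lemma not_integrable_on_if_bounded_below:
  fixes h :: "real \<Rightarrow> real"
  assumes c: "0 < c" and h: "\<And>x. x \<in> S \<Longrightarrow> c \<le> h x" and S: "\<And>L. \<exists>a. {a..a + L} \<subseteq> S"
  shows "\<not> h integrable_on S"
proof
  assume int: "h integrable_on S"
  define L where "L = \<bar>integral S h\<bar> / c + 1"
  obtain a where a: "{a..a + L} \<subseteq> S"
    using S by blast
  have "L \<ge> 0"
    using c by (simp add: L_def)
  have "c * L = integral {a..a + L} (\<lambda>_. c)"
    using \<open>L \<ge> 0\<close> by simp
  also have "\<dots> \<le> integral {a..a + L} h"
    using int a h by (intro integral_le integrable_on_subinterval[OF int]) auto
  also have "\<dots> \<le> integral S h"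
    using int a h c
    by (intro integral_subset_le integrable_on_subinterval[OF int]) (auto intro: order_trans less_imp_le)
  finally have "c * L \<le> integral S h" .
  moreover have "c * L = \<bar>integral S h\<bar> + c"
    using c by (simp add: L_def distrib_left)
  ultimately show False
    using c by linarith
qed

lemma L2_on_combination_not_bounded_below:
  fixes f g :: "real \<Rightarrow> complex"
  assumes f: "L2_on S f" and g: "L2_on S g" and S: "\<And>L. \<exists>a. {a..a + L} \<subseteq> S"
    and bound: "\<And>x. x \<in> S \<Longrightarrow> c \<le> norm (f x + b * g x)"
  shows "c \<le> 0"
proof (rule ccontr)
  assume "\<not> c \<le> 0"
  define h where "h x = 2 * norm (f x) ^ 2 + 2 * norm b ^ 2 * norm (g x) ^ 2" for x
  have "h integrable_on S"
    using f g integrable_on_cmult_left[where 'b = real]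
    unfolding L2_on_def h_def mult.assoc by (intro integrable_add) auto
  moreover have "c ^ 2 \<le> h x" if "x \<in> S" for x
  proof -
    have "c \<le> norm (f x) + norm b * norm (g x)"
      using bound[OF that] norm_triangle_ineq[of "f x" "b * g x"] by (simp add: norm_mult)
    then have "c ^ 2 \<le> (norm (f x) + norm b * norm (g x)) ^ 2"
      using \<open>\<not> c \<le> 0\<close> by (intro power_mono) auto
    also have "\<dots> \<le> h x"
      using zero_le_power2[of "norm (f x) - norm b * norm (g x)"]
      by (simp add: h_def power2_sum power2_diff power_mult_distrib)
    finally show ?thesis .
  qed
  ultimately show False
    using not_integrable_on_if_bounded_below[of "c ^ 2" S h] S \<open>\<not> c \<le> 0\<close> by auto
qed

lemma W22_on_solution_decaying_exp:
  fixes \<phi> \<phi>' \<phi>'' :: "real \<Rightarrow> complex" and k :: complex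
  assumes W: "W22_on S \<phi> \<phi>' \<phi>''"
    and S: "open S" "convex S" "\<And>L. \<exists>a. {a..a + L} \<subseteq> S"
    and growth: "\<And>x. x \<in> S \<Longrightarrow> 1 \<le> norm (exp (k * of_real x))"
    and ae: "AE x in lebesgue. x \<in> S \<longrightarrow> \<phi>'' x = k\<^sup>2 * \<phi> x"
  obtains D where "\<And>x. x \<in> S \<Longrightarrow> \<phi> x = D * exp (- k * of_real x)"
    and "\<And>x. x \<in> S \<Longrightarrow> \<phi>' x = - k * \<phi> x"
proof -
  have \<phi>: "(\<phi> has_vector_derivative \<phi>' x) (at x)" if "x \<in> S" for x
    using W that unfolding W22_on_def by blast
  have "((\<lambda>x. \<phi>' x + k * \<phi> x) has_vector_derivative k * (\<phi>' x + k * \<phi> x)) (at x)"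
    if "x \<in> S" for x
  proof -
    have "((\<lambda>x. \<phi>' x + k * \<phi> x) has_vector_derivative k\<^sup>2 * \<phi> x + k * \<phi>' x) (at x)"
      using W22_on_second_derivative[OF W S(1) ae that] \<phi>[OF that]
      by (intro has_vector_derivative_add has_vector_derivative_mult_right)
    then show ?thesis
      by (simp add: algebra_simps power2_eq_square)
  qed
  then obtain C where C: "\<And>x. x \<in> S \<Longrightarrow> \<phi>' x + k * \<phi> x = C * exp (k * of_real x)"
    using linear_ode_solution_exp[OF S(2)] by blast
  have "norm C \<le> 0"
  proof (rule L2_on_combination_not_bounded_below[OF _ _ S(3)])
    show "L2_on S \<phi>'" "L2_on S \<phi>"
      using W unfolding W22_on_def by auto
    show "norm C \<le> norm (\<phi>' x + k * \<phi> x)" if "x \<in> S" for x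
      using growth[OF that] mult_left_mono[of 1 _ "norm C"] by (simp add: C[OF that] norm_mult)
  qed
  then have \<phi>': "\<phi>' x = - k * \<phi> x" if "x \<in> S" for x
    using C[OF that] by (simp add: eq_neg_iff_add_eq_0)
  obtain D where "\<And>x. x \<in> S \<Longrightarrow> \<phi> x = D * exp (- k * of_real x)"
    using linear_ode_solution_exp[OF S(2), of \<phi> "- k"] \<phi> \<phi>' by metis
  with \<phi>' show ?thesis
    using that by blast
qed

definition two_sided_exp :: "complex \<Rightarrow> complex \<Rightarrow> complex \<Rightarrow> complex \<Rightarrow> real \<Rightarrow> complex" where
  "two_sided_exp A a B b x = (if x < 0 then A * exp (a * of_real x) else B * exp (b * of_real x))"

lemma eigenfunction_eq_two_sided_exp:
  fixes \<phi> \<phi>' \<phi>'' :: "real \<Rightarrow> complex" and k lam :: complex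
  assumes left: "W22_on {..<0} \<phi> \<phi>' \<phi>''" and right: "W22_on {0<..} \<phi> \<phi>' \<phi>''"
    and ae: "AE x in lebesgue. x \<noteq> 0 \<longrightarrow> - \<phi>'' x = lam * \<phi> x"
    and k: "lam = - k\<^sup>2" "0 \<le> Re k"
  obtains A B where "\<And>x. x \<noteq> 0 \<Longrightarrow> \<phi> x = two_sided_exp A k B (- k) x"
    and "\<And>x. x \<noteq> 0 \<Longrightarrow> \<phi>' x = two_sided_exp (k * A) k (- k * B) (- k) x"
proof -
  have ae_S: "AE x in lebesgue. x \<in> S \<longrightarrow> \<phi>'' x = c\<^sup>2 * \<phi> x" if "0 \<notin> S" "c\<^sup>2 = k\<^sup>2" for S c
    using ae by eventually_elim (use that k in \<open>auto simp: minus_equation_iff\<close>)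
  obtain B where B: "\<And>x. x > 0 \<Longrightarrow> \<phi> x = B * exp (- k * of_real x)"
    and B': "\<And>x. x > 0 \<Longrightarrow> \<phi>' x = - k * \<phi> x"
  proof (rule W22_on_solution_decaying_exp[OF right open_greaterThan convex_real_interval(3)])
    show "\<exists>a. {a..a + L} \<subseteq> {0<..}" for L :: real
      by (intro exI[of _ 1]) auto
    show "1 \<le> norm (exp (k * of_real x))" if "x \<in> {0<..}" for x
      using that k(2) by simp
  qed (use ae_S[of "{0<..}" k] in auto)
  obtain A where A: "\<And>x. x < 0 \<Longrightarrow> \<phi> x = A * exp (k * of_real x)"
    and A': "\<And>x. x < 0 \<Longrightarrow> \<phi>' x = k * \<phi> x"
  proof (rule W22_on_solution_decaying_exp[OF left open_lessThan convex_real_interval(4), of "- k"])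
    show "\<exists>a. {a..a + L} \<subseteq> {..<0}" for L :: real
      by (intro exI[of _ "- L - 1"]) auto
    show "1 \<le> norm (exp (- k * of_real x))" if "x \<in> {..<0}" for x
      using that k(2) by (simp add: mult_nonneg_nonpos)
  qed (use ae_S[of "{..<0}" "- k"] in auto)
  show ?thesis
    by (rule that[of A B]) (auto simp: two_sided_exp_def A A' B B' mult.assoc)
qed

lemma has_vector_derivative_two_sided_exp:
  assumes "x \<noteq> 0"
  shows "(two_sided_exp A a B b has_vector_derivative two_sided_exp (a * A) a (b * B) b x) (at x)"
proof (cases "x < 0")
  case True
  have "((\<lambda>x. A * exp (a * of_real x)) has_vector_derivative two_sided_exp (a * A) a (b * B) b x) (at x)"
    using has_vector_derivative_mult_right[OF has_vector_derivative_exp_scaled[of a x UNIV], of A] True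
    by (simp add: two_sided_exp_def mult_ac)
  then show ?thesis
    by (rule has_vector_derivative_transform_within_open[where S = "{..<0}"])
       (use True in \<open>auto simp: two_sided_exp_def\<close>)
next
  case False
  with assms have "x > 0"
    by simp
  have "((\<lambda>x. B * exp (b * of_real x)) has_vector_derivative two_sided_exp (a * A) a (b * B) b x) (at x)"
    using has_vector_derivative_mult_right[OF has_vector_derivative_exp_scaled[of b x UNIV], of B] False
    by (simp add: two_sided_exp_def mult_ac)
  then show ?thesis
    by (rule has_vector_derivative_transform_within_open[where S = "{0<..}"])
       (use \<open>x > 0\<close> in \<open>auto simp: two_sided_exp_def\<close>)
qed

lemma tendsto_two_sided_exp_at_left: "(two_sided_exp A a B b \<longlongrightarrow> A) (at_left 0)"
proof -
  have "((\<lambda>x. A * exp (a * of_real x)) \<longlongrightarrow> A * exp (a * of_real 0)) (at_left 0)"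
    by (intro tendsto_intros)
  moreover have "eventually (\<lambda>x. A * exp (a * of_real x) = two_sided_exp A a B b x) (at_left 0)"
    by (simp add: eventually_at_filter two_sided_exp_def)
  ultimately show ?thesis
    by (simp add: tendsto_cong)
qed

lemma tendsto_two_sided_exp_at_right: "(two_sided_exp A a B b \<longlongrightarrow> B) (at_right 0)"
proof -
  have "((\<lambda>x. B * exp (b * of_real x)) \<longlongrightarrow> B * exp (b * of_real 0)) (at_right 0)"
    by (intro tendsto_intros)
  moreover have "eventually (\<lambda>x. B * exp (b * of_real x) = two_sided_exp A a B b x) (at_right 0)"
    by (simp add: eventually_at_filter two_sided_exp_def)
  ultimately show ?thesis
    by (simp add: tendsto_cong)
qed

lemma measurable_on_two_sided_exp:
  assumes "open S" "0 \<notin> S"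
  shows "two_sided_exp A a B b measurable_on S"
proof -
  have "continuous_on S (two_sided_exp A a B b)"
    using assms(2) has_vector_derivative_two_sided_exp
    by (metis continuous_at_imp_continuous_on has_vector_derivative_continuous)
  then show ?thesis
    using assms(1)
    by (simp add: measurable_on_iff_borel_measurable continuous_imp_measurable_on_sets_lebesgue)
qed

lemma exp_integrable_on_positive_reals:
  fixes c :: real
  assumes "0 < c"
  shows "(\<lambda>x. exp (- c * x)) integrable_on {0<..}"
  by (rule integrable_spike_set[OF integrable_on_exp_minus_to_infinity[OF assms, of 0]])
     (auto intro: negligible_subset[OF negligible_sing[of 0]])

lemma exp_integrable_on_negative_reals:
  fixes c :: real
  assumes "0 < c"
  shows "(\<lambda>x. exp (c * x)) integrable_on {..<0}"
proof -
  have "(\<lambda>x. exp (- c * x)) absolutely_integrable_on {0<..}"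
    using exp_integrable_on_positive_reals[OF assms] by (rule nonnegative_absolutely_integrable_1) simp
  then have "(\<lambda>x. exp (- c * - x)) absolutely_integrable_on {..<0}"
    using has_absolute_integral_reflect_real[of "{..<0}" "{0<..}" "\<lambda>x. exp (- c * x)"] by auto
  then show ?thesis
    by (simp add: set_lebesgue_integral_eq_integral(1))
qed

lemma L2_on_two_sided_exp_positive_reals:
  assumes "Re b < 0"
  shows "L2_on {0<..} (two_sided_exp A a B b)"
  unfolding L2_on_def
proof
  show "two_sided_exp A a B b measurable_on {0<..}"
    by (simp add: measurable_on_two_sided_exp)
  have "(\<lambda>x. norm B ^ 2 * exp (- (- 2 * Re b) * x)) integrable_on {0<..}"
    using exp_integrable_on_positive_reals[of "- 2 * Re b"] assms
      integrable_on_cmult_left[where 'b = real]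
    by simp
  moreover have "norm (two_sided_exp A a B b x) ^ 2 = norm B ^ 2 * exp (- (- 2 * Re b) * x)"
    if "x \<in> {0<..}" for x
    using that
    by (simp add: two_sided_exp_def norm_mult power_mult_distrib flip: exp_of_nat_mult)
  ultimately show "(\<lambda>x. norm (two_sided_exp A a B b x) ^ 2) integrable_on {0<..}"
    using integrable_cong by (metis (no_types, lifting))
qed

lemma L2_on_two_sided_exp_negative_reals:
  assumes "0 < Re a"
  shows "L2_on {..<0} (two_sided_exp A a B b)"
  unfolding L2_on_def
proof
  show "two_sided_exp A a B b measurable_on {..<0}"
    by (simp add: measurable_on_two_sided_exp)
  have "(\<lambda>x. norm A ^ 2 * exp ((2 * Re a) * x)) integrable_on {..<0}"
    using exp_integrable_on_negative_reals[of "2 * Re a"] assms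
      integrable_on_cmult_left[where 'b = real]
    by simp
  moreover have "norm (two_sided_exp A a B b x) ^ 2 = norm A ^ 2 * exp ((2 * Re a) * x)"
    if "x \<in> {..<0}" for x
    using that
    by (simp add: two_sided_exp_def norm_mult power_mult_distrib flip: exp_of_nat_mult)
  ultimately show "(\<lambda>x. norm (two_sided_exp A a B b x) ^ 2) integrable_on {..<0}"
    using integrable_cong by (metis (no_types, lifting))
qed

lemma W22_on_two_sided_exp:
  assumes S: "is_interval S" "0 \<notin> S"
    and L2: "L2_on S (two_sided_exp A a B b)" "L2_on S (two_sided_exp (a * A) a (b * B) b)"
      "L2_on S (two_sided_exp (a * (a * A)) a (b * (b * B)) b)"
  shows "W22_on S (two_sided_exp A a B b) (two_sided_exp (a * A) a (b * B) b)
    (two_sided_exp (a * (a * A)) a (b * (b * B)) b)"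
  unfolding W22_on_def
proof (intro conjI ballI impI L2)
  show "(two_sided_exp A a B b has_vector_derivative two_sided_exp (a * A) a (b * B) b x) (at x)"
    if "x \<in> S" for x
    using S(2) that by (intro has_vector_derivative_two_sided_exp) auto
  show "(two_sided_exp (a * (a * A)) a (b * (b * B)) b has_integral
      two_sided_exp (a * A) a (b * B) b y - two_sided_exp (a * A) a (b * B) b x) {x..y}"
    if "x \<in> S" "y \<in> S" "x \<le> y" for x y
  proof (rule fundamental_theorem_of_calculus[OF \<open>x \<le> y\<close>])
    fix t assume "t \<in> {x..y}"
    then have "t \<in> S"
      using S(1) that by (meson atLeastAtMost_iff mem_is_interval_1_I)
    then show "(two_sided_exp (a * A) a (b * B) b has_vector_derivative
        two_sided_exp (a * (a * A)) a (b * (b * B)) b t) (at t within {x..y})"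
      using S(2) by (metis has_vector_derivative_at_within has_vector_derivative_two_sided_exp)
  qed
qed

lemma in_dom_H_two_sided_exp_iff:
  fixes \<kappa> \<beta> :: real and A a B b :: complex
  assumes W: "W22_on {..<0} \<phi> \<phi>' \<phi>''" "W22_on {0<..} \<phi> \<phi>' \<phi>''"
    and \<phi>: "\<And>x. x \<noteq> 0 \<Longrightarrow> \<phi> x = two_sided_exp A a B b x"
    and \<phi>': "\<And>x. x \<noteq> 0 \<Longrightarrow> \<phi>' x = two_sided_exp (a * A) a (b * B) b x"
  shows "in_dom_H \<kappa> \<beta> \<phi> \<phi>' \<phi>'' \<longleftrightarrow> B = \<kappa> * A \<and> b * B = \<beta> * A + a * A / \<kappa>"
proof -
  have lim_iff: "(f \<longlongrightarrow> l) (at 0 within S) \<longleftrightarrow> l = c"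
    if "at (0::real) within S \<noteq> bot" "(g \<longlongrightarrow> c) (at 0 within S)" "\<And>x. x \<noteq> 0 \<Longrightarrow> f x = g x"
    for f g :: "real \<Rightarrow> complex" and S c l
  proof -
    have "\<forall>\<^sub>F x in at 0 within S. f x = g x"
      using that(3) by (simp add: eventually_at_filter)
    then have "(f \<longlongrightarrow> l) (at 0 within S) \<longleftrightarrow> (g \<longlongrightarrow> l) (at 0 within S)"
      by (rule tendsto_cong)
    then show ?thesis
      using tendsto_unique[OF that(1)] that(2) by blast
  qed
  have "(\<phi> \<longlongrightarrow> l) (at_left 0) \<longleftrightarrow> l = A" "(\<phi> \<longlongrightarrow> l) (at_right 0) \<longleftrightarrow> l = B"
    "(\<phi>' \<longlongrightarrow> l) (at_left 0) \<longleftrightarrow> l = a * A" "(\<phi>' \<longlongrightarrow> l) (at_right 0) \<longleftrightarrow> l = b * B" for l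
    by (rule lim_iff; simp add: \<phi> \<phi>' tendsto_two_sided_exp_at_left tendsto_two_sided_exp_at_right)+
  then show ?thesis
    using W by (simp add: in_dom_H_def of_real_inverse divide_inverse mult.commute)
qed

lemma coupling_condition_iff:
  fixes \<kappa> \<beta> k :: "'a::field"
  assumes "\<kappa> \<noteq> 0" "\<kappa>\<^sup>2 + 1 \<noteq> 0"
  shows "- k * \<kappa> = \<beta> + k / \<kappa> \<longleftrightarrow> k = - (\<kappa> * \<beta>) / (\<kappa>\<^sup>2 + 1)"
proof -
  have "- k * \<kappa> = \<beta> + k / \<kappa> \<longleftrightarrow> (- k * \<kappa>) * \<kappa> = (\<beta> + k / \<kappa>) * \<kappa>"
    using assms(1) by (rule mult_right_cancel[symmetric])
  also have "(\<beta> + k / \<kappa>) * \<kappa> = \<beta> * \<kappa> + k"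
    using assms(1) by (simp add: distrib_right)
  also have "(- k * \<kappa>) * \<kappa> = \<beta> * \<kappa> + k \<longleftrightarrow> k * (\<kappa>\<^sup>2 + 1) = - (\<kappa> * \<beta>)"
    by (auto simp: power2_eq_square algebra_simps neg_eq_iff_add_eq_0 eq_neg_iff_add_eq_0)
  also have "\<dots> \<longleftrightarrow> k = - (\<kappa> * \<beta>) / (\<kappa>\<^sup>2 + 1)"
    by (rule nonzero_eq_divide_eq[symmetric, OF assms(2)])
  finally show ?thesis .
qed

lemma of_real_square_plus_one_neq_zero:
  fixes x :: real
  shows "complex_of_real x ^ 2 + 1 \<noteq> 0"
proof -
  have "complex_of_real x ^ 2 + 1 = complex_of_real (x ^ 2 + 1)"
    by simp
  moreover have "0 < x ^ 2 + 1"
    by (simp add: add_nonneg_pos)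
  ultimately show ?thesis
    by (metis of_real_eq_0_iff less_irrefl)
qed

lemma is_eigenvalue_H_imp_eq:
  fixes \<kappa> \<beta> :: real and lam :: complex
  assumes "\<kappa> \<noteq> 0" and "is_eigenvalue_H \<kappa> \<beta> lam"
  shows "lam = complex_of_real (- ((\<kappa> * \<beta>) / (\<kappa>\<^sup>2 + 1))\<^sup>2)"
proof -
  obtain \<phi> \<phi>' \<phi>'' where dom: "in_dom_H \<kappa> \<beta> \<phi> \<phi>' \<phi>''"
    and nonzero: "\<not> (AE x in lebesgue. \<phi> x = 0)"
    and ae: "AE x in lebesgue. x \<noteq> 0 \<longrightarrow> - \<phi>'' x = lam * \<phi> x"
    using assms(2) unfolding is_eigenvalue_H_def by blast
  have W: "W22_on {..<0} \<phi> \<phi>' \<phi>''" "W22_on {0<..} \<phi> \<phi>' \<phi>''"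
    using dom unfolding in_dom_H_def by auto
  define k where "k = csqrt (- lam)"
  have k: "lam = - k\<^sup>2" "0 \<le> Re k"
    unfolding k_def by (simp add: power2_csqrt, rule Re_csqrt)
  obtain A B where \<phi>: "\<And>x. x \<noteq> 0 \<Longrightarrow> \<phi> x = two_sided_exp A k B (- k) x"
    and \<phi>': "\<And>x. x \<noteq> 0 \<Longrightarrow> \<phi>' x = two_sided_exp (k * A) k (- k * B) (- k) x"
    using eigenfunction_eq_two_sided_exp[OF W ae k] by blast
  have B: "B = \<kappa> * A" and coupling: "- k * B = \<beta> * A + k * A / \<kappa>"
    using dom in_dom_H_two_sided_exp_iff[OF W \<phi> \<phi>'] by auto
  have "A \<noteq> 0"
  proof
    assume "A = 0"
    then have "\<phi> x = 0" if "x \<noteq> 0" for x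
      using B \<phi>[OF that] by (simp add: two_sided_exp_def)
    then have "AE x in lebesgue. \<phi> x = 0"
      using AE_completion[OF AE_lborel_singleton[of 0]] by (auto elim: eventually_mono)
    with nonzero show False ..
  qed
  have "- k * \<kappa> = \<beta> + k / \<kappa>"
  proof -
    have "(- k * \<kappa>) * A = (\<beta> + k / \<kappa>) * A"
      using B coupling by (simp add: algebra_simps)
    with \<open>A \<noteq> 0\<close> show ?thesis
      using mult_right_cancel by blast
  qed
  then have "k = - (\<kappa> * \<beta>) / (complex_of_real \<kappa> ^ 2 + 1)"
    using coupling_condition_iff[where \<kappa> = "complex_of_real \<kappa>" and \<beta> = "complex_of_real \<beta>"]
      assms(1) of_real_square_plus_one_neq_zero by simp
  then show ?thesis
    using k(1) by (simp add: power2_eq_square)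
qed

lemma is_eigenvalue_H_if_mult_neg:
  fixes \<kappa> \<beta> :: real
  assumes "\<kappa> * \<beta> < 0"
  shows "is_eigenvalue_H \<kappa> \<beta> (complex_of_real (- ((\<kappa> * \<beta>) / (\<kappa>\<^sup>2 + 1))\<^sup>2))"
proof -
  define k where "k = complex_of_real (- (\<kappa> * \<beta>) / (\<kappa>\<^sup>2 + 1))"
  have "0 < Re k"
    using assms by (simp add: k_def divide_neg_pos add_nonneg_pos)
  define \<phi> where "\<phi> = two_sided_exp 1 k \<kappa> (- k)"
  define \<phi>' where "\<phi>' = two_sided_exp (k * 1) k (- k * \<kappa>) (- k)"
  define \<phi>'' where "\<phi>'' = two_sided_exp (k * (k * 1)) k (- k * (- k * \<kappa>)) (- k)"
  have W: "W22_on {..<0} \<phi> \<phi>' \<phi>''" "W22_on {0<..} \<phi> \<phi>' \<phi>''"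
    unfolding \<phi>_def \<phi>'_def \<phi>''_def using \<open>0 < Re k\<close>
    by (intro W22_on_two_sided_exp L2_on_two_sided_exp_negative_reals
        L2_on_two_sided_exp_positive_reals; simp add: is_interval_convex_1)+
  have "\<kappa> \<noteq> 0"
    using assms by auto
  have "- k * \<kappa> = \<beta> + k / \<kappa> \<longleftrightarrow>
      k = - (complex_of_real \<kappa> * complex_of_real \<beta>) / (complex_of_real \<kappa> ^ 2 + 1)"
    by (rule coupling_condition_iff) (use \<open>\<kappa> \<noteq> 0\<close> of_real_square_plus_one_neq_zero in auto)
  then have "- k * \<kappa> = \<beta> + k / \<kappa>"
    by (simp add: k_def)
  then have dom: "in_dom_H \<kappa> \<beta> \<phi> \<phi>' \<phi>''"
    using in_dom_H_two_sided_exp_iff[OF W] by (simp add: \<phi>_def \<phi>'_def)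
  have "\<not> (AE x in lebesgue. \<phi> x = 0)"
  proof
    assume "AE x in lebesgue. \<phi> x = 0"
    then have "AE x in lebesgue. x \<in> {..0::real}"
      by eventually_elim (use \<open>\<kappa> \<noteq> 0\<close> in \<open>auto simp: \<phi>_def two_sided_exp_def split: if_splits\<close>)
    then show False
      using mem_closed_if_AE_lebesgue[of "{..0::real}" 1] by simp
  qed
  moreover have "AE x in lebesgue. x \<noteq> 0 \<longrightarrow> - \<phi>'' x = - k\<^sup>2 * \<phi> x"
    by (simp add: \<phi>_def \<phi>''_def two_sided_exp_def power2_eq_square)
  ultimately show ?thesis
    using dom unfolding is_eigenvalue_H_def by (auto simp: k_def power2_eq_square)
qed

theorem lemma1:
  fixes \<kappa> \<beta> :: real
  assumes "\<kappa> * \<beta> < 0"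
  shows "{lam. is_eigenvalue_H \<kappa> \<beta> lam} = {complex_of_real (- (((\<kappa> * \<beta>) / (\<kappa> ^ 2 + 1)) ^ 2))}"
proof -
  have "\<kappa> \<noteq> 0"
    using assms by auto
  then show ?thesis
    using is_eigenvalue_H_imp_eq is_eigenvalue_H_if_mult_neg[OF assms] by blast
qed

end
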